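(* Any set of reflections of $G_6$ containing at least one element of $R'=R_1\cup R_1^{-1}$ and at least one element of $S$ generates the entire group $G_6$.
   Context: Let $G_7$ be the subgroup of $GL_2(\mathbb{C})$ generated by $s=\begin{bmatrix}1&0\\0&-1\end{bmatrix}$, $t=\frac14\begin{bmatrix}(1+\sqrt3)+(-1+\sqrt3)i & (1+\sqrt3)+(-1+\sqrt3)i\\ (-1+\sqrt3)-(1+\sqrt3)i & (1-\sqrt3)+(1+\sqrt3)i\end{bmatrix}$ and $u=t^{\top}$ (presentation $\langle s,t,u\mid s^2=t^3=u^3=1,\ stu=ust=tus\rangle$, order $144$). A reflection is a linear map of $\mathbb{C}^2$ whose fixed space has dimension $1$. Let $S$ be the $G_7$-conjugacy class of $s$ (six reflections of order $2$), $R_1$ the $G_7$-conjugacy class of $t$ (four reflections of order $3$), and $R_1^{-1}=\{r^{-1}:r\in R_1\}$. Let $G_6=\langle s,t\rangle$, of order $48$; its fourteen reflections are the elements of $R_1\cup R_1^{-1}\cup S$, and $R_1$, $R_1^{-1}$, $S$ are its reflection conjugacy classes. *)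

theory Defs
  imports "HOL-Analysis.Analysis"
begin

type_synonym cmat = "complex^2^2"

definition mat2 :: "complex \<Rightarrow> complex \<Rightarrow> complex \<Rightarrow> complex \<Rightarrow> cmat" where
  "mat2 a b c d = vector [vector [a, b], vector [c, d]]"

definition r3 :: complex where "r3 = complex_of_real (sqrt 3)"

definition s_mat :: cmat where "s_mat = mat2 1 0 0 (-1)"

definition t_mat :: cmat where
  "t_mat = mat2 (((1 + r3) + (-1 + r3) * \<i>) / 4) (((1 + r3) + (-1 + r3) * \<i>) / 4)
                (((-1 + r3) - (1 + r3) * \<i>) / 4) (((1 - r3) + (1 + r3) * \<i>) / 4)"

definition u_mat :: cmat where "u_mat = transpose t_mat"

inductive_set gen_group :: "cmat set \<Rightarrow> cmat set" for X :: "cmat set" where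
  gen_one: "mat 1 \<in> gen_group X"
| gen_base: "x \<in> X \<Longrightarrow> x \<in> gen_group X"
| gen_mult: "a \<in> gen_group X \<Longrightarrow> b \<in> gen_group X \<Longrightarrow> a ** b \<in> gen_group X"
| gen_inv: "a \<in> gen_group X \<Longrightarrow> matrix_inv a \<in> gen_group X"

definition G7 :: "cmat set" where "G7 = gen_group {s_mat, t_mat, u_mat}"
definition G6 :: "cmat set" where "G6 = gen_group {s_mat, t_mat}"

definition is_reflection :: "cmat \<Rightarrow> bool" where
  "is_reflection A \<longleftrightarrow> vec.dim {v :: complex^2. A *v v = v} = 1"

definition conj_class_G7 :: "cmat \<Rightarrow> cmat set" where
  "conj_class_G7 x = {g ** x ** matrix_inv g | g. g \<in> G7}"

definition S_cls :: "cmat set" where "S_cls = conj_class_G7 s_mat"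
definition R1 :: "cmat set" where "R1 = conj_class_G7 t_mat"
definition R1_inv :: "cmat set" where "R1_inv = matrix_inv ` R1"
definition R' :: "cmat set" where "R' = R1 \<union> R1_inv"

definition reflections_G6 :: "cmat set" where
  "reflections_G6 = {A \<in> G6. is_reflection A}"

end

theory Submission
  imports Defs
begin

text \<open>
  All entries of s and t lie in Q(sqrt 3, i), so products in G6 can be computed exactly over the
  rationals. Right multiplication by s and t permutes an explicit list of 48 matrices containing 1,
  and a finite set closed under right multiplication by invertible generators contains the group
  they generate; hence G6 lies in this list. Trace and determinant are invariant under
  G7-conjugation, which leaves 4 candidates for an element of R1 in G6 and 6 for an element of S.
  For each of the 24 pairs, s and t are explicit words in the pair. An element of R1^-1
  contributes its inverse, which lies in R1.
\<close>

lemma gen_group_subset_gen_group: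
  assumes "X \<subseteq> gen_group Y"
  shows "gen_group X \<subseteq> gen_group Y"
proof
  fix a assume "a \<in> gen_group X"
  then show "a \<in> gen_group Y"
    using assms by induction (auto intro: gen_group.intros)
qed

lemma matrix_inv_inverse:
  fixes A :: "'a::semiring_1^'n^'n"
  assumes "invertible A"
  shows "A ** matrix_inv A = mat 1" and "matrix_inv A ** A = mat 1"
  using someI_ex[OF assms[unfolded invertible_def]] by (auto simp: matrix_inv_def)

lemma matrix_inv_unique:
  fixes A B :: "'a::semiring_1^'n^'n"
  assumes "A ** B = mat 1" and "B ** A = mat 1"
  shows "matrix_inv A = B"
proof -
  have "invertible A"
    using assms invertible_def by blast
  have "matrix_inv A = matrix_inv A ** (A ** B)"
    by (simp add: assms(1))
  also have "\<dots> = (matrix_inv A ** A) ** B"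
    by (simp add: matrix_mul_assoc)
  also have "\<dots> = B"
    by (simp add: matrix_inv_inverse(2)[OF \<open>invertible A\<close>])
  finally show ?thesis .
qed

lemma invertible_matrix_inv:
  fixes A :: "'a::semiring_1^'n^'n"
  shows "invertible A \<Longrightarrow> invertible (matrix_inv A)"
  using matrix_inv_inverse invertible_def by blast

lemma matrix_inv_matrix_inv:
  fixes A :: "'a::semiring_1^'n^'n"
  shows "invertible A \<Longrightarrow> matrix_inv (matrix_inv A) = A"
  by (simp add: matrix_inv_inverse matrix_inv_unique)

lemma invertible_transpose:
  fixes A :: "'a::comm_semiring_1^'n^'n"
  shows "invertible A \<Longrightarrow> invertible (transpose A)"
  by (metis invertible_def matrix_transpose_mul transpose_mat)

lemma invertible_gen_group:
  assumes "\<forall>x\<in>X. invertible x" and "a \<in> gen_group X"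
  shows "invertible a"
  using assms(2,1)
  by induction (auto intro: invertible_mult invertible_matrix_inv simp: invertible_def[of "mat 1"])

lemma gen_group_subset_right_closed:
  assumes "finite L" and "mat 1 \<in> L" and "\<forall>x\<in>X. invertible x"
    and "\<And>a x. a \<in> L \<Longrightarrow> x \<in> X \<Longrightarrow> a ** x \<in> L"
  shows "gen_group X \<subseteq> L"
proof -
  define M where "M = {g. invertible g \<and> (\<lambda>a. a ** g) ` L \<subseteq> L}"
  have "g \<in> M" if "g \<in> gen_group X" for g
    using that
  proof induction
    case gen_one
    show ?case
      by (auto simp: M_def invertible_def)
  next
    case (gen_base x)
    then show ?case
      using assms(3,4) by (auto simp: M_def)
  next
    case (gen_mult g h)
    then show ?case
      by (fastforce simp: M_def invertible_mult matrix_mul_assoc[symmetric])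
  next
    case (gen_inv g)
    then have g: "invertible g" and gL: "(\<lambda>a. a ** g) ` L \<subseteq> L"
      by (auto simp: M_def)
    have "inj_on (\<lambda>a. a ** g) L"
      by (rule inj_onI) (metis g matrix_inv_inverse(1) matrix_mul_assoc matrix_mul_rid)
    then have onto: "(\<lambda>a. a ** g) ` L = L"
      using endo_inj_surj[OF assms(1) gL] by blast
    have "a ** matrix_inv g \<in> L" if "a \<in> L" for a
    proof -
      obtain b where "b \<in> L" "a = b ** g"
        using onto \<open>a \<in> L\<close> by blast
      then show ?thesis
        by (simp add: g matrix_inv_inverse(1) matrix_mul_assoc[symmetric])
    qed
    then show ?case
      using g invertible_matrix_inv by (auto simp: M_def)
  qed
  then show ?thesis
    using assms(2) by (force simp: M_def)
qed

lemma trace_conj: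
  fixes g a :: "'a::field^'n^'n"
  assumes "invertible g"
  shows "trace (g ** a ** matrix_inv g) = trace a"
proof -
  have "trace (g ** a ** matrix_inv g) = trace (matrix_inv g ** (g ** a))"
    by (rule trace_mul_sym)
  then show ?thesis
    by (simp add: matrix_mul_assoc matrix_inv_inverse(2)[OF assms])
qed

lemma det_conj:
  fixes g a :: "'a::field^'n^'n"
  assumes "invertible g"
  shows "det (g ** a ** matrix_inv g) = det a"
proof -
  have "det g * det (matrix_inv g) = 1"
    using det_mul[of g "matrix_inv g"] by (simp add: matrix_inv_inverse(1)[OF assms])
  then show ?thesis
    by (simp add: det_mul algebra_simps)
qed

section \<open>Exact arithmetic in Q(sqrt 3, i)\<close>

text \<open>(a, b, c, d) stands for a + b sqrt 3 + (c + d sqrt 3) i.\<close>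

type_synonym qi3 = "rat \<times> rat \<times> rat \<times> rat"

fun qi3_val :: "qi3 \<Rightarrow> complex" where
  "qi3_val (a, b, c, d) = Complex (of_rat a + of_rat b * sqrt 3) (of_rat c + of_rat d * sqrt 3)"

fun qi3_add :: "qi3 \<Rightarrow> qi3 \<Rightarrow> qi3" where
  "qi3_add (a, b, c, d) (e, f, g, h) = (a + e, b + f, c + g, d + h)"

fun qi3_diff :: "qi3 \<Rightarrow> qi3 \<Rightarrow> qi3" where
  "qi3_diff (a, b, c, d) (e, f, g, h) = (a - e, b - f, c - g, d - h)"

fun qi3_mult :: "qi3 \<Rightarrow> qi3 \<Rightarrow> qi3" where
  "qi3_mult (a, b, c, d) (e, f, g, h) =
     (a*e + 3*b*f - c*g - 3*d*h, a*f + b*e - c*h - d*g,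
      a*g + c*e + 3*b*h + 3*d*f, a*h + d*e + b*g + c*f)"

lemma qi3_val_add: "qi3_val (qi3_add x y) = qi3_val x + qi3_val y"
  by (cases x; cases y) (simp add: complex_eq_iff of_rat_add algebra_simps)

lemma qi3_val_diff: "qi3_val (qi3_diff x y) = qi3_val x - qi3_val y"
  by (cases x; cases y) (simp add: complex_eq_iff of_rat_diff algebra_simps)

lemma qi3_val_mult: "qi3_val (qi3_mult x y) = qi3_val x * qi3_val y"
proof -
  have sqrt3: "sqrt 3 * (sqrt 3 * r) = 3 * r" for r :: real
    by (simp add: mult.assoc[symmetric])
  show ?thesis
    by (cases x; cases y)
       (simp add: complex_eq_iff of_rat_add of_rat_diff of_rat_mult algebra_simps sqrt3)
qed

text \<open>
  Since sqrt 3 is irrational, a + b sqrt 3 = 0 forces a = b = 0. The weaker consequence that the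
  norm a^2 - 3 b^2 vanishes needs no irrationality proof and already singles out the candidates
  below.
\<close>

definition sqrt3_norm :: "rat \<Rightarrow> rat \<Rightarrow> rat" where
  "sqrt3_norm a b = a * a - 3 * b * b"

lemma sqrt3_norm_eq_0:
  assumes "of_rat a + of_rat b * sqrt 3 = (0::real)"
  shows "sqrt3_norm a b = 0"
proof -
  have "(of_rat a :: real) = - of_rat b * sqrt 3"
    using assms by linarith
  then have "(of_rat (a * a) :: real) = of_rat (3 * b * b)"
    by (simp add: of_rat_mult algebra_simps)
  then show ?thesis
    by (simp add: sqrt3_norm_def)
qed

fun qi3_null :: "qi3 \<Rightarrow> bool" where
  "qi3_null (a, b, c, d) \<longleftrightarrow> sqrt3_norm a b = 0 \<and> sqrt3_norm c d = 0"

lemma qi3_null_diff_if_val_eq: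
  assumes "qi3_val x = qi3_val y"
  shows "qi3_null (qi3_diff x y)"
proof -
  have "qi3_val (qi3_diff x y) = 0"
    by (simp add: qi3_val_diff assms)
  then show ?thesis
    by (cases "qi3_diff x y") (auto simp: complex_eq_iff intro: sqrt3_norm_eq_0)
qed

lemma mat2_nth [simp]:
  "mat2 a b c d $ 1 $ 1 = a" "mat2 a b c d $ 1 $ 2 = b"
  "mat2 a b c d $ 2 $ 1 = c" "mat2 a b c d $ 2 $ 2 = d"
  by (simp_all add: mat2_def vector_2)

lemma mat2_eq_iff:
  "mat2 a b c d = mat2 a' b' c' d' \<longleftrightarrow> a = a' \<and> b = b' \<and> c = c' \<and> d = d'"
  by (metis mat2_nth)

lemma mat2_mult:
  "mat2 a b c d ** mat2 e f g h = mat2 (a*e + b*g) (a*f + b*h) (c*e + d*g) (c*f + d*h)"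
  by (simp add: vec_eq_iff forall_2 matrix_matrix_mult_def UNIV_2)

lemma mat_1_eq_mat2: "(mat 1 :: cmat) = mat2 1 0 0 1"
  by (simp add: vec_eq_iff forall_2 mat_def)

lemma trace_mat2: "trace (mat2 a b c d) = a + d"
  by (simp add: trace_def UNIV_2)

lemma det_mat2: "det (mat2 a b c d) = a * d - b * c"
  by (simp add: det_2)

type_synonym qmat = "qi3 \<times> qi3 \<times> qi3 \<times> qi3"

fun qmat_val :: "qmat \<Rightarrow> cmat" where
  "qmat_val (a, b, c, d) = mat2 (qi3_val a) (qi3_val b) (qi3_val c) (qi3_val d)"

fun qmat_mult :: "qmat \<Rightarrow> qmat \<Rightarrow> qmat" where
  "qmat_mult (a, b, c, d) (e, f, g, h) =
     (qi3_add (qi3_mult a e) (qi3_mult b g), qi3_add (qi3_mult a f) (qi3_mult b h),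
      qi3_add (qi3_mult c e) (qi3_mult d g), qi3_add (qi3_mult c f) (qi3_mult d h))"

fun qmat_trace :: "qmat \<Rightarrow> qi3" where
  "qmat_trace (a, b, c, d) = qi3_add a d"

fun qmat_det :: "qmat \<Rightarrow> qi3" where
  "qmat_det (a, b, c, d) = qi3_diff (qi3_mult a d) (qi3_mult b c)"

definition qmat_one :: qmat where
  "qmat_one = ((1, 0, 0, 0), (0, 0, 0, 0), (0, 0, 0, 0), (1, 0, 0, 0))"

lemma qmat_val_mult: "qmat_val (qmat_mult x y) = qmat_val x ** qmat_val y"
  by (cases x; cases y) (simp only: qmat_mult.simps qmat_val.simps mat2_mult qi3_val_mult qi3_val_add)

lemma qmat_val_one: "qmat_val qmat_one = mat 1"
  by (simp add: qmat_one_def mat_1_eq_mat2 mat2_eq_iff complex_eq_iff)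

lemma trace_qmat_val: "trace (qmat_val x) = qi3_val (qmat_trace x)"
  by (cases x) (simp only: qmat_trace.simps qmat_val.simps trace_mat2 qi3_val_add)

lemma det_qmat_val: "det (qmat_val x) = qi3_val (qmat_det x)"
  by (cases x) (simp only: qmat_det.simps qmat_val.simps det_mat2 qi3_val_diff qi3_val_mult)

definition s_qmat :: qmat where
  "s_qmat = ((1, 0, 0, 0), (0, 0, 0, 0), (0, 0, 0, 0), (-1, 0, 0, 0))"

definition t_qmat :: qmat where
  "t_qmat = ((1/4, 1/4, -1/4, 1/4), (1/4, 1/4, -1/4, 1/4),
             (-1/4, 1/4, -1/4, -1/4), (1/4, -1/4, 1/4, 1/4))"

lemma qmat_val_s: "qmat_val s_qmat = s_mat"
  by (simp add: s_qmat_def s_mat_def mat2_eq_iff complex_eq_iff)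

lemma qmat_val_t: "qmat_val t_qmat = t_mat"
  by (simp add: t_qmat_def t_mat_def mat2_eq_iff complex_eq_iff r3_def of_rat_divide of_rat_minus)

section \<open>The elements of G6\<close>

definition G6_list :: "qmat list" where
  "G6_list = [((1,0,0,0),(0,0,0,0),(0,0,0,0),(1,0,0,0)),
  ((1,0,0,0),(0,0,0,0),(0,0,0,0),(-1,0,0,0)),
  ((1/4,1/4,-1/4,1/4),(1/4,1/4,-1/4,1/4),(-1/4,1/4,-1/4,-1/4),(1/4,-1/4,1/4,1/4)),
  ((1/4,1/4,-1/4,1/4),(1/4,1/4,-1/4,1/4),(1/4,-1/4,1/4,1/4),(-1/4,1/4,-1/4,-1/4)),
  ((1/4,1/4,-1/4,1/4),(-1/4,-1/4,1/4,-1/4),(-1/4,1/4,-1/4,-1/4),(-1/4,1/4,-1/4,-1/4)),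
  ((1/4,1/4,1/4,-1/4),(-1/4,1/4,1/4,1/4),(1/4,1/4,1/4,-1/4),(1/4,-1/4,-1/4,-1/4)),
  ((1/4,1/4,-1/4,1/4),(-1/4,-1/4,1/4,-1/4),(1/4,-1/4,1/4,1/4),(1/4,-1/4,1/4,1/4)),
  ((1/4,1/4,1/4,-1/4),(-1/4,1/4,1/4,1/4),(-1/4,-1/4,-1/4,1/4),(-1/4,1/4,1/4,1/4)),
  ((-1/4,1/4,1/4,1/4),(1/4,1/4,1/4,-1/4),(1/4,-1/4,-1/4,-1/4),(1/4,1/4,1/4,-1/4)),
  ((1/4,1/4,1/4,-1/4),(1/4,-1/4,-1/4,-1/4),(1/4,1/4,1/4,-1/4),(-1/4,1/4,1/4,1/4)),
  ((-1/4,1/4,1/4,1/4),(1/4,1/4,1/4,-1/4),(-1/4,1/4,1/4,1/4),(-1/4,-1/4,-1/4,1/4)),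
  ((1/4,1/4,1/4,-1/4),(1/4,-1/4,-1/4,-1/4),(-1/4,-1/4,-1/4,1/4),(1/4,-1/4,-1/4,-1/4)),
  ((-1/4,1/4,1/4,1/4),(-1/4,-1/4,-1/4,1/4),(1/4,-1/4,-1/4,-1/4),(-1/4,-1/4,-1/4,1/4)),
  ((0,0,0,0),(0,0,1,0),(0,0,-1,0),(0,0,0,0)),
  ((0,0,0,0),(1,0,0,0),(1,0,0,0),(0,0,0,0)),
  ((-1/4,1/4,1/4,1/4),(-1/4,-1/4,-1/4,1/4),(-1/4,1/4,1/4,1/4),(1/4,1/4,1/4,-1/4)),
  ((0,0,0,0),(0,0,1,0),(0,0,1,0),(0,0,0,0)),
  ((0,0,0,0),(1,0,0,0),(-1,0,0,0),(0,0,0,0)),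
  ((0,0,1,0),(0,0,0,0),(0,0,0,0),(0,0,-1,0)),
  ((0,0,0,0),(0,0,-1,0),(0,0,-1,0),(0,0,0,0)),
  ((0,0,0,0),(-1,0,0,0),(1,0,0,0),(0,0,0,0)),
  ((-1/4,1/4,-1/4,-1/4),(1/4,-1/4,1/4,1/4),(1/4,1/4,-1/4,1/4),(1/4,1/4,-1/4,1/4)),
  ((0,0,1,0),(0,0,0,0),(0,0,0,0),(0,0,1,0)),
  ((0,0,0,0),(0,0,-1,0),(0,0,1,0),(0,0,0,0)),
  ((0,0,0,0),(-1,0,0,0),(-1,0,0,0),(0,0,0,0)),
  ((-1/4,1/4,-1/4,-1/4),(1/4,-1/4,1/4,1/4),(-1/4,-1/4,1/4,-1/4),(-1/4,-1/4,1/4,-1/4)),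
  ((1/4,-1/4,1/4,1/4),(1/4,-1/4,1/4,1/4),(-1/4,-1/4,1/4,-1/4),(1/4,1/4,-1/4,1/4)),
  ((-1/4,-1/4,1/4,-1/4),(1/4,1/4,-1/4,1/4),(-1/4,1/4,-1/4,-1/4),(-1/4,1/4,-1/4,-1/4)),
  ((1/4,-1/4,1/4,1/4),(-1/4,1/4,-1/4,-1/4),(1/4,1/4,-1/4,1/4),(1/4,1/4,-1/4,1/4)),
  ((-1/4,1/4,-1/4,-1/4),(-1/4,1/4,-1/4,-1/4),(1/4,1/4,-1/4,1/4),(-1/4,-1/4,1/4,-1/4)),
  ((1/4,-1/4,1/4,1/4),(1/4,-1/4,1/4,1/4),(1/4,1/4,-1/4,1/4),(-1/4,-1/4,1/4,-1/4)),
  ((-1/4,-1/4,1/4,-1/4),(1/4,1/4,-1/4,1/4),(1/4,-1/4,1/4,1/4),(1/4,-1/4,1/4,1/4)),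
  ((1/4,-1/4,1/4,1/4),(-1/4,1/4,-1/4,-1/4),(-1/4,-1/4,1/4,-1/4),(-1/4,-1/4,1/4,-1/4)),
  ((-1/4,1/4,-1/4,-1/4),(-1/4,1/4,-1/4,-1/4),(-1/4,-1/4,1/4,-1/4),(1/4,1/4,-1/4,1/4)),
  ((-1/4,-1/4,1/4,-1/4),(-1/4,-1/4,1/4,-1/4),(-1/4,1/4,-1/4,-1/4),(1/4,-1/4,1/4,1/4)),
  ((1/4,-1/4,-1/4,-1/4),(-1/4,-1/4,-1/4,1/4),(1/4,-1/4,-1/4,-1/4),(1/4,1/4,1/4,-1/4)),
  ((-1/4,-1/4,-1/4,1/4),(-1/4,1/4,1/4,1/4),(1/4,1/4,1/4,-1/4),(-1/4,1/4,1/4,1/4)),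
  ((1/4,-1/4,-1/4,-1/4),(1/4,1/4,1/4,-1/4),(-1/4,1/4,1/4,1/4),(1/4,1/4,1/4,-1/4)),
  ((-1/4,-1/4,1/4,-1/4),(-1/4,-1/4,1/4,-1/4),(1/4,-1/4,1/4,1/4),(-1/4,1/4,-1/4,-1/4)),
  ((1/4,-1/4,-1/4,-1/4),(-1/4,-1/4,-1/4,1/4),(-1/4,1/4,1/4,1/4),(-1/4,-1/4,-1/4,1/4)),
  ((-1/4,-1/4,-1/4,1/4),(-1/4,1/4,1/4,1/4),(-1/4,-1/4,-1/4,1/4),(1/4,-1/4,-1/4,-1/4)),
  ((1/4,-1/4,-1/4,-1/4),(1/4,1/4,1/4,-1/4),(1/4,-1/4,-1/4,-1/4),(-1/4,-1/4,-1/4,1/4)),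
  ((-1/4,-1/4,-1/4,1/4),(1/4,-1/4,-1/4,-1/4),(1/4,1/4,1/4,-1/4),(1/4,-1/4,-1/4,-1/4)),
  ((0,0,-1,0),(0,0,0,0),(0,0,0,0),(0,0,1,0)),
  ((-1/4,-1/4,-1/4,1/4),(1/4,-1/4,-1/4,-1/4),(-1/4,-1/4,-1/4,1/4),(-1/4,1/4,1/4,1/4)),
  ((0,0,-1,0),(0,0,0,0),(0,0,0,0),(0,0,-1,0)),
  ((-1,0,0,0),(0,0,0,0),(0,0,0,0),(1,0,0,0)),
  ((-1,0,0,0),(0,0,0,0),(0,0,0,0),(-1,0,0,0))]"

text \<open>
  The index lists are the permutations of G6_list induced by right multiplication; checking them
  avoids a quadratic membership search.
\<close>

lemma G6_list_mult_s:
  "map (\<lambda>e. qmat_mult e s_qmat) G6_list = map ((!) G6_list) [1,0,4,6,2,9,3,11,12,5,15,7,8,19,20,10,23,24,22,13,14,29,18,16,17,33,32,34,30,21,28,38,26,25,27,41,42,39,31,37,44,35,36,45,40,43,47,46]"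
  by (simp add: G6_list_def s_qmat_def)

lemma G6_list_mult_t:
  "map (\<lambda>e. qmat_mult e t_qmat) G6_list = map ((!) G6_list) [2,3,5,7,8,0,10,1,13,14,16,17,18,4,21,22,6,25,26,27,28,9,30,31,32,11,12,35,36,37,15,39,40,41,42,19,20,43,44,23,24,45,46,29,47,33,34,38]"
  by (simp add: G6_list_def t_qmat_def)

lemma length_G6_list: "length G6_list = 48"
  by (simp add: G6_list_def)

lemma right_closed_G6_list:
  assumes "e \<in> set G6_list" and "x \<in> {s_qmat, t_qmat}"
  shows "qmat_mult e x \<in> set G6_list"
proof -
  have "set (map (\<lambda>e. qmat_mult e s_qmat) G6_list) \<subseteq> set G6_list"
    and "set (map (\<lambda>e. qmat_mult e t_qmat) G6_list) \<subseteq> set G6_list"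
    unfolding G6_list_mult_s G6_list_mult_t by (auto simp: length_G6_list)
  moreover have "qmat_mult e x \<in> set (map (\<lambda>e. qmat_mult e x) G6_list)"
    using assms(1) unfolding set_map by (rule imageI)
  ultimately show ?thesis
    using assms(2) by blast
qed

lemma s_mat_square: "s_mat ** s_mat = mat 1"
proof -
  have "qmat_mult s_qmat s_qmat = qmat_one"
    by (simp add: s_qmat_def qmat_one_def)
  then show ?thesis
    by (metis qmat_val_mult qmat_val_one qmat_val_s)
qed

lemma t_mat_cube: "t_mat ** t_mat ** t_mat = mat 1"
proof -
  have "qmat_mult (qmat_mult t_qmat t_qmat) t_qmat = qmat_one"
    by (simp add: t_qmat_def qmat_one_def)
  then show ?thesis
    by (metis qmat_val_mult qmat_val_one qmat_val_t)
qed

lemma invertible_s_mat: "invertible s_mat"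
  using s_mat_square invertible_def by blast

lemma invertible_t_mat: "invertible t_mat"
  using t_mat_cube invertible_left_inverse by blast

lemma invertible_G7:
  assumes "g \<in> G7"
  shows "invertible g"
proof (rule invertible_gen_group)
  show "\<forall>x\<in>{s_mat, t_mat, u_mat}. invertible x"
    using invertible_s_mat invertible_t_mat invertible_transpose by (auto simp: u_mat_def)
  show "g \<in> gen_group {s_mat, t_mat, u_mat}"
    using assms by (simp add: G7_def)
qed

lemma G6_subset_G6_list: "G6 \<subseteq> qmat_val ` set G6_list"
  unfolding G6_def
proof (rule gen_group_subset_right_closed)
  show "finite (qmat_val ` set G6_list)"
    by simp
  have "G6_list ! 0 = qmat_one"
    by (simp add: G6_list_def qmat_one_def)
  then have "qmat_one \<in> set G6_list"
    by (metis length_G6_list nth_mem zero_less_numeral)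
  then show "mat 1 \<in> qmat_val ` set G6_list"
    using qmat_val_one[symmetric] by (rule rev_image_eqI)
  show "\<forall>x\<in>{s_mat, t_mat}. invertible x"
    using invertible_s_mat invertible_t_mat by blast
  fix a x
  assume a: "a \<in> qmat_val ` set G6_list" and x: "x \<in> {s_mat, t_mat}"
  obtain e where e: "e \<in> set G6_list" "a = qmat_val e"
    using a by blast
  have "x = qmat_val s_qmat \<or> x = qmat_val t_qmat"
    using x by (simp add: qmat_val_s qmat_val_t)
  then obtain y where y: "y \<in> {s_qmat, t_qmat}" "x = qmat_val y"
    by blast
  have "a ** x = qmat_val (qmat_mult e y)"
    by (simp only: e(2) y(2) qmat_val_mult)
  then show "a ** x \<in> qmat_val ` set G6_list"
    using right_closed_G6_list[OF e(1) y(1)] by blast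
qed

lemma trace_det_conj_class_G7:
  assumes "y \<in> conj_class_G7 x"
  shows "trace y = trace x" and "det y = det x"
proof -
  obtain g where "invertible g" "y = g ** x ** matrix_inv g"
    using assms invertible_G7 by (auto simp: conj_class_G7_def)
  then show "trace y = trace x" and "det y = det x"
    by (simp_all add: trace_conj det_conj)
qed

lemma invertible_R1:
  assumes "r \<in> R1"
  shows "invertible r"
proof -
  obtain g where "invertible g" "r = g ** t_mat ** matrix_inv g"
    using assms invertible_G7 by (auto simp: R1_def conj_class_G7_def)
  then show ?thesis
    by (simp add: invertible_mult invertible_matrix_inv invertible_t_mat)
qed

definition conj_candidates :: "qmat \<Rightarrow> qmat list" where
  "conj_candidates x =
     [e \<leftarrow> G6_list. qi3_null (qi3_diff (qmat_trace e) (qmat_trace x))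
                   \<and> qi3_null (qi3_diff (qmat_det e) (qmat_det x))]"

lemma conj_class_G7_inter_G6:
  "conj_class_G7 (qmat_val x) \<inter> G6 \<subseteq> qmat_val ` set (conj_candidates x)"
proof
  fix y
  assume y: "y \<in> conj_class_G7 (qmat_val x) \<inter> G6"
  then obtain e where e: "e \<in> set G6_list" "y = qmat_val e"
    using G6_subset_G6_list by blast
  have "qi3_val (qmat_trace e) = qi3_val (qmat_trace x)"
    and "qi3_val (qmat_det e) = qi3_val (qmat_det x)"
    using y e trace_det_conj_class_G7 by (simp_all flip: trace_qmat_val det_qmat_val)
  then have "e \<in> set (conj_candidates x)"
    using e(1) qi3_null_diff_if_val_eq unfolding conj_candidates_def set_filter by blast
  then show "y \<in> qmat_val ` set (conj_candidates x)"
    using e(2) by blast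
qed

lemma conj_candidates_t: "conj_candidates t_qmat = map ((!) G6_list) [2, 6, 26, 28]"
  by (simp add: conj_candidates_def G6_list_def t_qmat_def sqrt3_norm_def)

lemma conj_candidates_s: "conj_candidates s_qmat = map ((!) G6_list) [1, 13, 14, 23, 24, 46]"
  by (simp add: conj_candidates_def G6_list_def s_qmat_def sqrt3_norm_def)

section \<open>Generating pairs\<close>

fun word :: "qmat \<Rightarrow> qmat \<Rightarrow> string \<Rightarrow> qmat" where
  "word r s [] = qmat_one"
| "word r s (c # cs) = qmat_mult (if c = CHR ''r'' then r else s) (word r s cs)"

lemma qmat_val_word_in_gen_group: "qmat_val (word r s cs) \<in> gen_group {qmat_val r, qmat_val s}"
  by (induction cs) (auto simp: qmat_val_one qmat_val_mult intro: gen_group.intros)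

text \<open>
  Row i, column j holds words for s and t in the i-th element of conj_candidates t_qmat
  (letter r) and the j-th element of conj_candidates s_qmat (letter s).
\<close>

definition generating_words :: "(string \<times> string) list list" where
  "generating_words = [[(''s'', ''r''),
     (''rrsr'', ''r''),
     (''rsrr'', ''r''),
     (''srrsrs'', ''r''),
     (''srsrrs'', ''r''),
     (''rrsrsrrsr'', ''r'')],
    [(''s'', ''srs''),
     (''srrsrs'', ''rrsrsr''),
     (''srsrrs'', ''rsrsrr''),
     (''rrsr'', ''rrsrsr''),
     (''rsrr'', ''rsrsrr''),
     (''rrsrsrrsr'', ''srs'')],
    [(''s'', ''rsrsrr''),
     (''srrsrs'', ''srs''),
     (''rsrr'', ''rrsrsr''),
     (''rrsr'', ''srs''),
     (''srsrrs'', ''rrsrsr''),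
     (''rrsrsrrsr'', ''rsrsrr'')],
    [(''s'', ''rrsrsr''),
     (''rrsr'', ''rsrsrr''),
     (''srsrrs'', ''srs''),
     (''srrsrs'', ''rsrsrr''),
     (''rsrr'', ''srs''),
     (''rrsrsrrsr'', ''rrsrsr'')]]"

lemma generating_words_correct:
  "list_all2 (\<lambda>e. list_all2 (\<lambda>w p. word e w (fst p) = s_qmat \<and> word e w (snd p) = t_qmat)
       (conj_candidates s_qmat))
     (conj_candidates t_qmat) generating_words"
  unfolding conj_candidates_t conj_candidates_s
  by (simp add: generating_words_def G6_list_def s_qmat_def t_qmat_def qmat_one_def)

lemma list_all2_in_setD1: "list_all2 P xs ys \<Longrightarrow> x \<in> set xs \<Longrightarrow> \<exists>y\<in>set ys. P x y"
  by (induction xs ys rule: list_all2_induct) auto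

lemma R1_inter_G6: "R1 \<inter> G6 \<subseteq> qmat_val ` set (conj_candidates t_qmat)"
  using conj_class_G7_inter_G6[of t_qmat] by (simp add: R1_def qmat_val_t)

lemma S_cls_inter_G6: "S_cls \<inter> G6 \<subseteq> qmat_val ` set (conj_candidates s_qmat)"
  using conj_class_G7_inter_G6[of s_qmat] by (simp add: S_cls_def qmat_val_s)

lemma generators_in_gen_group_R1_S:
  assumes "r \<in> R1 \<inter> G6" and "s \<in> S_cls \<inter> G6"
  shows "{s_mat, t_mat} \<subseteq> gen_group {r, s}"
proof -
  obtain e w where e: "e \<in> set (conj_candidates t_qmat)" "r = qmat_val e"
    and w: "w \<in> set (conj_candidates s_qmat)" "s = qmat_val w"
    using assms R1_inter_G6 S_cls_inter_G6 by blast
  obtain row where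
    "list_all2 (\<lambda>w p. word e w (fst p) = s_qmat \<and> word e w (snd p) = t_qmat)
       (conj_candidates s_qmat) row"
    using list_all2_in_setD1[OF generating_words_correct e(1)] by blast
  then obtain p where "word e w (fst p) = s_qmat" and "word e w (snd p) = t_qmat"
    using list_all2_in_setD1[OF _ w(1)] by blast
  then show ?thesis
    using qmat_val_word_in_gen_group[of e w "fst p"] qmat_val_word_in_gen_group[of e w "snd p"]
    by (simp add: e(2) w(2) qmat_val_s qmat_val_t)
qed

lemma matrix_inv_R1_inv:
  assumes "x \<in> R1_inv"
  shows "matrix_inv x \<in> R1"
proof -
  obtain r where "r \<in> R1" and "x = matrix_inv r"
    using assms by (auto simp: R1_inv_def)
  then show ?thesis
    by (simp add: invertible_R1 matrix_inv_matrix_inv)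
qed

theorem proposition3p11:
  fixes X :: "(complex^2^2) set"
  assumes "X \<subseteq> reflections_G6"
    and "X \<inter> R' \<noteq> {}"
    and "X \<inter> S_cls \<noteq> {}"
  shows "gen_group X = G6"
proof
  have X_G6: "X \<subseteq> G6"
    using assms(1) by (auto simp: reflections_G6_def)
  then show "gen_group X \<subseteq> G6"
    unfolding G6_def by (rule gen_group_subset_gen_group)
  obtain x y where x: "x \<in> X" "x \<in> R'" and y: "y \<in> X" "y \<in> S_cls"
    using assms(2,3) by blast
  obtain r where r: "r \<in> gen_group X" "r \<in> R1"
    using x matrix_inv_R1_inv unfolding R'_def by (blast intro: gen_group.gen_base gen_group.gen_inv)
  have "r \<in> G6"
    using r(1) X_G6 gen_group_subset_gen_group unfolding G6_def by blast
  then have "{s_mat, t_mat} \<subseteq> gen_group {r, y}"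
    using r(2) y X_G6 by (intro generators_in_gen_group_R1_S) auto
  also have "\<dots> \<subseteq> gen_group X"
    using r(1) y(1) by (intro gen_group_subset_gen_group) (auto intro: gen_group.gen_base)
  finally show "G6 \<subseteq> gen_group X"
    unfolding G6_def by (rule gen_group_subset_gen_group)
qed

end
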